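(* Let $\beta\in\mathbb{N}=\{0,1,2,\dots\}$ and $\alpha\in\mathbb{D}\setminus\{0\}$. Let $\phi_\alpha(z)=\dfrac{\alpha-z}{1-\overline{\alpha}z}$, let $\lambda\in\mathbb{T}$, and suppose $\phi=\phi_\alpha\circ(\lambda\phi_\alpha)$ is an elliptic automorphism of finite order $N$, i.e. $N$ is the smallest positive integer with $\lambda^N=1$. For $n=0,1,\dots,N-1$ let $V_n=\ker(C_\phi^*-\overline{\lambda}^nI)$, where $C_\phi f=f\circ\phi$ acts on $A^2_\beta$ and $C_\phi^*$ is its adjoint. If $N\ge 2(3+\beta)$, then $V_0\perp V_{3+\beta}$.
   Context: $\mathbb{D}$ is the open unit disc and $\mathbb{T}$ the unit circle. For $\beta>-1$, $A^2_\beta$ is the Hilbert space of analytic functions $f(z)=\sum_{n\ge0}\widehat f(n)z^n$ on $\mathbb{D}$ with inner product $\langle f,g\rangle=\sum_{n\ge0}\frac{n!\,\Gamma(2+\beta)}{\Gamma(n+2+\beta)}\widehat f(n)\overline{\widehat g(n)}$ (equivalently the $L^2$ inner product with respect to $(\beta+1)(1-|z|^2)^\beta dA(z)$). *)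

theory Defs
  imports "HOL-Analysis.Analysis"
begin

definition taylor_coeff :: "(complex \<Rightarrow> complex) \<Rightarrow> nat \<Rightarrow> complex" where
  "taylor_coeff f n = (deriv ^^ n) f 0 / fact n"

definition bergman_weight :: "real \<Rightarrow> nat \<Rightarrow> real" where
  "bergman_weight \<beta> n = fact n * Gamma (2 + \<beta>) / Gamma (real n + 2 + \<beta>)"

definition A2 :: "real \<Rightarrow> (complex \<Rightarrow> complex) set" where
  "A2 \<beta> = {f. f holomorphic_on ball 0 1 \<and>
     summable (\<lambda>n. bergman_weight \<beta> n * (cmod (taylor_coeff f n))^2)}"

definition A2_inner :: "real \<Rightarrow> (complex \<Rightarrow> complex) \<Rightarrow> (complex \<Rightarrow> complex) \<Rightarrow> complex" where
  "A2_inner \<beta> f g = (\<Sum>n. complex_of_real (bergman_weight \<beta> n) * taylor_coeff f n * cnj (taylor_coeff g n))"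

definition mobius_phi :: "complex \<Rightarrow> complex \<Rightarrow> complex" where
  "mobius_phi \<alpha> z = (\<alpha> - z) / (1 - cnj \<alpha> * z)"

definition comp_op :: "(complex \<Rightarrow> complex) \<Rightarrow> (complex \<Rightarrow> complex) \<Rightarrow> (complex \<Rightarrow> complex)" where
  "comp_op \<phi> f = f \<circ> \<phi>"

text \<open>ker(C_phi^* - mu I) on A^2_beta: those g with C_phi^* g = mu g, i.e.
  <C_phi f, g> = <f, mu g> for all f in A^2_beta (definition of the adjoint).\<close>
definition adj_eigenspace :: "real \<Rightarrow> (complex \<Rightarrow> complex) \<Rightarrow> complex \<Rightarrow> (complex \<Rightarrow> complex) set" where
  "adj_eigenspace \<beta> \<phi> \<mu> = {g \<in> A2 \<beta>. \<forall>f \<in> A2 \<beta>.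
      A2_inner \<beta> (comp_op \<phi> f) g = A2_inner \<beta> f (\<lambda>z. \<mu> * g z)}"

end

theory Submission
  imports Defs "HOL-Complex_Analysis.Cauchy_Integral_Formula"
begin

text \<open>
  Write \<open>\<gamma> = \<beta> + 2\<close>. The involution \<open>\<phi>\<^sub>\<alpha>\<close> gives the unitary, self-adjoint operator
  \<open>U f = (f \<circ> \<phi>\<^sub>\<alpha>) k\<^sub>\<alpha>\<close> with \<open>k\<^sub>\<alpha> = (1 - |\<alpha>|\<^sup>2)\<^bsup>\<gamma>/2\<^esup> / (1 - cnj \<alpha> z)\<^bsup>\<gamma>\<^esup>\<close>, and
  \<open>C\<^sub>\<phi>\<^sub>\<alpha> = M\<^sub>q U\<close> where \<open>q = 1 / k\<^sub>\<alpha>\<close> is a polynomial of degree \<open>\<gamma>\<close>.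
  Since \<open>\<phi>\<^sub>\<alpha>\<^sup>j \<circ> \<phi> = \<lambda>\<^sup>j \<phi>\<^sub>\<alpha>\<^sup>j\<close> and \<open>\<phi>\<^sub>\<alpha>\<^sup>j = C\<^sub>\<phi>\<^sub>\<alpha> z\<^sup>j\<close>, the adjoint eigen-equation shows that
  for \<open>g \<in> V\<^sub>m\<close> the Taylor coefficients of \<open>E = U M\<^sub>q\<^sup>* g\<close> vanish off the residue class
  of \<open>m\<close> mod \<open>N\<close>. As \<open>(U M\<^sub>q\<^sup>*)\<^sup>2 = (C\<^sub>\<phi>\<^sub>\<alpha>\<^sup>2)\<^sup>* = I\<close>, we get \<open>g = U M\<^sub>q\<^sup>* E\<close>, hence
  \<open>\<langle>g, h\<rangle> = \<langle>M\<^sub>q\<^sup>* E\<^sub>0, M\<^sub>q\<^sup>* E\<^sub>1\<rangle>\<close>. The \<open>k\<close>-th coefficient of \<open>M\<^sub>q\<^sup>* E\<close> only involves the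
  coefficients \<open>k, \<dots>, k + \<gamma>\<close> of \<open>E\<close>, while the supports of \<open>E\<^sub>0\<close> and \<open>E\<^sub>1\<close> (the classes
  of \<open>0\<close> and \<open>\<gamma> + 1\<close>) are more than \<open>\<gamma>\<close> apart when \<open>N \<ge> 2(\<gamma> + 1)\<close>.
\<close>

section \<open>Series and Taylor coefficients\<close>

lemma summable_nonneg_le:
  fixes f g :: "nat \<Rightarrow> real"
  assumes "\<And>n. 0 \<le> f n" "\<And>n. f n \<le> g n" "summable g"
  shows "summable f"
  by (rule summable_comparison_test'[OF assms(3), of 0]) (use assms in auto)

lemma mult_le_half_sum_squares: "(p::real) * q \<le> (p\<^sup>2 + q\<^sup>2) / 2"
  using sum_squares_bound[of p q] by (simp add: mult.assoc)

lemma cnj_mult_self: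
  "z * cnj z = (complex_of_real (norm z))\<^sup>2" "cnj z * z = (complex_of_real (norm z))\<^sup>2"
  using complex_norm_square[of z] by (simp_all add: mult.commute)

lemma sums_suminf_swap:
  fixes f :: "nat \<Rightarrow> nat \<Rightarrow> complex"
  assumes rows: "\<And>i. summable (\<lambda>j. norm (f i j))"
    and total: "summable (\<lambda>i. \<Sum>j. norm (f i j))"
  shows "(\<lambda>j. \<Sum>i. f i j) sums (\<Sum>i. \<Sum>j. f i j)"
proof -
  have abs_rows: "Infinite_Set_Sum.abs_summable_on (\<lambda>j. f i j) UNIV" for i
    using rows[of i] by (simp add: abs_summable_on_nat_iff')
  have "(\<lambda>n. \<bar>\<Sum>j. norm (f n j)\<bar>) = (\<lambda>n. \<Sum>j. norm (f n j))"
    using rows by (intro ext abs_of_nonneg suminf_nonneg) auto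
  then have "Infinite_Set_Sum.abs_summable_on (\<lambda>i. infsetsum (\<lambda>j. norm (f i j)) UNIV) UNIV"
    using rows total by (simp add: abs_summable_on_nat_iff' infsetsum_nat')
  then have abs: "Infinite_Set_Sum.abs_summable_on (\<lambda>(i, j). f i j) (UNIV \<times> UNIV)"
    using abs_summable_on_Sigma_iff[of UNIV "\<lambda>_. UNIV" "\<lambda>(i, j). f i j"] abs_rows by simp
  then have abs_swap: "Infinite_Set_Sum.abs_summable_on (\<lambda>(j, i). f i j) (UNIV \<times> UNIV)"
    by (subst (asm) abs_summable_on_Times_swap) (simp add: case_prod_unfold)
  then have abs_cols: "Infinite_Set_Sum.abs_summable_on (\<lambda>i. f i j) UNIV" for j
    using abs_summable_on_Sigma_iff[of UNIV "\<lambda>_. UNIV" "\<lambda>(j, i). f i j"] by simp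
  have "(\<lambda>j. infsetsum (\<lambda>i. f i j) UNIV) sums infsetsum (\<lambda>j. infsetsum (\<lambda>i. f i j) UNIV) UNIV"
    using abs_swap abs_summable_on_Sigma_project1'[of "\<lambda>j i. f i j" UNIV "\<lambda>_. UNIV"]
    by (intro sums_infsetsum_nat') simp
  also have "infsetsum (\<lambda>j. infsetsum (\<lambda>i. f i j) UNIV) UNIV
      = infsetsum (\<lambda>i. infsetsum (\<lambda>j. f i j) UNIV) UNIV"
    by (rule infsetsum_swap[symmetric]) (use abs in auto)
  also have "\<dots> = (\<Sum>i. \<Sum>j. f i j)"
    using abs abs_summable_on_Sigma_project1'[of "\<lambda>i j. f i j" UNIV "\<lambda>_. UNIV"]
    by (simp add: infsetsum_nat' abs_rows)
  finally show ?thesis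
    by (simp add: infsetsum_nat' abs_cols)
qed

lemma sums_suminf_swap_dominated:
  fixes f :: "nat \<Rightarrow> nat \<Rightarrow> complex"
  assumes le: "\<And>i j. norm (f i j) \<le> a i * r ^ j" and a: "summable a" and r: "0 \<le> r" "r < 1"
  shows "(\<lambda>j. \<Sum>i. f i j) sums (\<Sum>i. \<Sum>j. f i j)"
proof (rule sums_suminf_swap)
  have geom: "(\<lambda>j. r ^ j) sums (1 / (1 - r))"
    using geometric_sums[of r] r by simp
  show rows: "summable (\<lambda>j. norm (f i j))" for i
    by (rule summable_nonneg_le[OF _ le]) (use r in simp_all)
  show "summable (\<lambda>i. \<Sum>j. norm (f i j))"
  proof (rule summable_nonneg_le[where g = "\<lambda>i. a i * (1 / (1 - r))"])
    fix i
    show "0 \<le> (\<Sum>j. norm (f i j))"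
      by (rule suminf_nonneg[OF rows]) simp
    have "(\<Sum>j. norm (f i j)) \<le> (\<Sum>j. a i * r ^ j)"
      by (rule suminf_le[OF le rows summable_mult[OF sums_summable[OF geom]]])
    also have "\<dots> = a i * (1 / (1 - r))"
      by (rule sums_unique[symmetric]) (rule sums_mult[OF geom])
    finally show "(\<Sum>j. norm (f i j)) \<le> a i * (1 / (1 - r))" .
  qed (rule summable_mult2[OF a])
qed

lemma taylor_coeff_sums:
  assumes "f holomorphic_on ball 0 r" "z \<in> ball 0 r"
  shows "(\<lambda>n. taylor_coeff f n * z ^ n) sums f z"
  using holomorphic_power_series[OF assms] by (simp add: taylor_coeff_def)

lemma taylor_coeff_unique:
  assumes r: "r > 0" and sums: "\<And>z. z \<in> ball 0 r \<Longrightarrow> (\<lambda>n. c n * z ^ n) sums f z"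
  shows "taylor_coeff f n = c n"
proof -
  have "fps_conv_radius (Abs_fps c) \<ge> ereal r"
    unfolding fps_conv_radius_def
  proof (rule conv_radius_geI_ex)
    fix t :: real assume "0 < t" "ereal t < ereal r"
    then show "\<exists>z. norm z = t \<and> summable (\<lambda>n. fps_nth (Abs_fps c) n * z ^ n)"
      using sums[of "of_real t"] by (intro exI[of _ "complex_of_real t"]) (auto simp: sums_iff)
  qed
  then have "0 < fps_conv_radius (Abs_fps c)"
    using r by (meson ereal_less(2) less_le_trans zero_ereal_def)
  moreover have "eventually (\<lambda>z. z \<in> ball 0 r) (nhds (0::complex))"
    using r by (intro eventually_nhds_in_open) auto
  then have "\<forall>\<^sub>F z in nhds 0. eval_fps (Abs_fps c) z = f z"
    by eventually_elim (use sums in \<open>auto simp: eval_fps_def sums_iff\<close>)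
  ultimately have "f has_fps_expansion Abs_fps c"
    unfolding has_fps_expansion_def by blast
  from fps_nth_fps_expansion[OF this, of n] show ?thesis
    by (simp add: taylor_coeff_def)
qed

lemma taylor_coeff_cong:
  assumes "r > 0" "\<And>z. z \<in> ball 0 r \<Longrightarrow> f z = g z"
  shows "taylor_coeff f n = taylor_coeff g n"
proof -
  have "eventually (\<lambda>z. z \<in> ball 0 r) (nhds (0::complex))"
    using assms by (intro eventually_nhds_in_open) auto
  then have "eventually (\<lambda>z. f z = g z) (nhds 0)"
    by eventually_elim (use assms in auto)
  then show ?thesis
    unfolding taylor_coeff_def by (subst higher_deriv_cong_ev[of f g 0 0 n]) auto
qed

lemma taylor_coeff_mult:
  assumes "f holomorphic_on ball 0 r" "g holomorphic_on ball 0 r" "r > 0"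
  shows "taylor_coeff (\<lambda>z. f z * g z) n = (\<Sum>i=0..n. taylor_coeff f i * taylor_coeff g (n - i))"
proof -
  have "taylor_coeff (\<lambda>z. f z * g z) n =
     (\<Sum>i=0..n. of_nat (n choose i) * (deriv ^^ i) f 0 * (deriv ^^ (n - i)) g 0) / fact n"
    using higher_deriv_mult[of f "ball 0 r" g 0 n] assms by (simp add: taylor_coeff_def)
  also have "\<dots> = (\<Sum>i=0..n. taylor_coeff f i * taylor_coeff g (n - i))"
    unfolding sum_divide_distrib taylor_coeff_def
  proof (rule sum.cong)
    fix i assume "i \<in> {0..n}"
    then have "of_nat (n choose i) = (fact n / (fact i * fact (n - i)) :: complex)"
      using binomial_fact[of i n] by simp
    then show "of_nat (n choose i) * (deriv ^^ i) f 0 * (deriv ^^ (n - i)) g 0 / fact n =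
         (deriv ^^ i) f 0 / fact i * ((deriv ^^ (n - i)) g 0 / fact (n - i))"
      by (simp add: field_simps)
  qed simp
  finally show ?thesis .
qed

lemma taylor_coeff_cmult:
  assumes "f holomorphic_on ball 0 r" "r > 0"
  shows "taylor_coeff (\<lambda>z. c * f z) n = c * taylor_coeff f n"
  using higher_deriv_cmult[of f "ball 0 r" 0 n c] assms by (simp add: taylor_coeff_def)

lemma taylor_coeff_poly:
  "taylor_coeff (\<lambda>z. \<Sum>i\<le>d. c i * z ^ i) n = (if n \<le> d then c n else 0)"
proof (rule taylor_coeff_unique[of 1])
  fix z :: complex
  have "(\<lambda>n. (if n \<le> d then c n else 0) * z ^ n) = (\<lambda>n. if n \<in> {..d} then c n * z ^ n else 0)"
    by auto
  then show "(\<lambda>n. (if n \<le> d then c n else 0) * z ^ n) sums (\<Sum>i\<le>d. c i * z ^ i)"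
    using sums_If_finite_set[of "{..d}" "\<lambda>n. c n * z ^ n"] by simp
qed simp

lemma taylor_coeff_monom: "taylor_coeff (\<lambda>z. z ^ k) n = (if n = k then 1 else 0)"
proof (rule taylor_coeff_unique[of 1])
  fix z :: complex
  have "(\<lambda>n. (if n = k then 1 else 0) * z ^ n) = (\<lambda>n. if n = k then z ^ n else 0)"
    by auto
  then show "(\<lambda>n. (if n = k then 1 else 0) * z ^ n) sums (z ^ k)"
    using sums_single[of k "\<lambda>n. z ^ n"] by simp
qed simp

lemma taylor_coeff_binomial:
  "taylor_coeff (\<lambda>z. (x - z) ^ n) i =
     (if i \<le> n then of_nat (n choose i) * x ^ (n - i) * (-1) ^ i else 0)"
proof -
  have "(x - z) ^ n = (\<Sum>k\<le>n. (of_nat (n choose k) * x ^ (n - k) * (-1) ^ k) * z ^ k)" for z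
    using binomial_ring[of "- z" x n] by (simp add: power_minus[of z] mult_ac)
  then show ?thesis by (simp add: taylor_coeff_poly)
qed

lemma has_field_derivative_inverse_power:
  fixes c z :: complex
  assumes "1 - c * z \<noteq> 0"
  shows "((\<lambda>z. inverse ((1 - c * z) ^ p)) has_field_derivative
          (of_nat p * c * inverse ((1 - c * z) ^ Suc p))) (at z)"
proof -
  define D where "D = 1 - c * z"
  have D: "D \<noteq> 0" using assms by (simp add: D_def)
  have "((\<lambda>z. (1 - c * z) ^ p) has_field_derivative (of_nat p * D ^ (p - 1) * (- c))) (at z)"
    unfolding D_def by (auto intro!: derivative_eq_intros)
  from DERIV_inverse_fun[OF this] have "((\<lambda>z. inverse ((1 - c * z) ^ p)) has_field_derivative
      (- (of_nat p * D ^ (p - 1) * (- c) * inverse ((D ^ p) ^ Suc (Suc 0))))) (at z)"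
    using D by (simp add: D_def)
  moreover have "- (of_nat p * D ^ (p - 1) * (- c) * inverse ((D ^ p) ^ Suc (Suc 0))) = of_nat p * c * inverse (D ^ Suc p)"
    using D by (cases p) (simp_all add: field_simps power2_eq_square)
  ultimately have "((\<lambda>z. inverse ((1 - c * z) ^ p)) has_field_derivative
      (of_nat p * c * inverse (D ^ Suc p))) (at z)"
    by (rule DERIV_cong)
  then show ?thesis by (simp only: D_def)
qed

lemma higher_deriv_inverse_power:
  fixes c z :: complex
  assumes "1 - c * z \<noteq> 0"
  shows "(deriv ^^ k) (\<lambda>z. inverse ((1 - c * z) ^ m)) z =
    c ^ k * of_nat (pochhammer m k) * inverse ((1 - c * z) ^ (m + k))"
  using assms
proof (induction k arbitrary: z)
  case (Suc k)
  have "open {z. 1 - c * z \<noteq> 0}"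
    by (intro open_Collect_neq continuous_intros)
  then have "eventually (\<lambda>x. x \<in> {z. 1 - c * z \<noteq> 0}) (nhds z)"
    using Suc.prems by (intro eventually_nhds_in_open) auto
  then have "eventually (\<lambda>x. 1 - c * x \<noteq> 0) (nhds z)"
    by simp
  then have "(deriv ^^ Suc k) (\<lambda>z. inverse ((1 - c * z) ^ m)) z
      = deriv (\<lambda>x. c ^ k * of_nat (pochhammer m k) * inverse ((1 - c * x) ^ (m + k))) z"
    by (simp, intro deriv_cong_ev) (auto elim!: eventually_mono simp: Suc.IH)
  also have "\<dots> = c ^ k * of_nat (pochhammer m k) * (of_nat (m + k) * c * inverse ((1 - c * z) ^ Suc (m + k)))"
    by (intro DERIV_imp_deriv DERIV_cmult has_field_derivative_inverse_power Suc.prems)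
  finally show ?case
    by (simp add: pochhammer_Suc algebra_simps)
qed simp

lemma taylor_coeff_inverse_power:
  "taylor_coeff (\<lambda>z. inverse ((1 - c * z) ^ m)) k = c ^ k * of_nat (pochhammer m k) / fact k"
  using higher_deriv_inverse_power[of c 0 k m] by (simp add: taylor_coeff_def)

lemma taylor_coeff_abs_summable:
  assumes "f holomorphic_on ball 0 1" "0 \<le> t" "t < 1"
  shows "summable (\<lambda>n. norm (taylor_coeff f n) * t ^ n)"
proof -
  have "1 \<le> conv_radius (taylor_coeff f)"
  proof (rule conv_radius_geI_ex)
    fix r :: real assume "0 < r" "ereal r < 1"
    then show "\<exists>z. norm z = r \<and> summable (\<lambda>n. taylor_coeff f n * z ^ n)"
      using taylor_coeff_sums[OF assms(1), of "of_real r"]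
      by (intro exI[of _ "complex_of_real r"]) (auto simp: sums_iff)
  qed
  with assms(3) have "ereal t < conv_radius (taylor_coeff f)"
    using order.strict_trans2[of "ereal t" 1] by simp
  then have "ereal (norm (complex_of_real t)) < conv_radius (taylor_coeff f)"
    using assms(2) by simp
  from abs_summable_in_conv_radius[OF this] show ?thesis
    using assms(2) by (simp add: norm_mult norm_power)
qed

section \<open>The coefficient space of \<open>A\<^sup>2\<^sub>\<beta>\<close>\<close>

locale bergman_coeffs =
  fixes b :: nat
begin

definition w :: "nat \<Rightarrow> real" where
  "w n = bergman_weight (real b) n"

definition l2 :: "(nat \<Rightarrow> complex) \<Rightarrow> bool" where
  "l2 x \<longleftrightarrow> summable (\<lambda>n. w n * (norm (x n))\<^sup>2)"

definition l2_inner :: "(nat \<Rightarrow> complex) \<Rightarrow> (nat \<Rightarrow> complex) \<Rightarrow> complex" where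
  "l2_inner x y = (\<Sum>n. complex_of_real (w n) * x n * cnj (y n))"

definition l2_sqnorm :: "(nat \<Rightarrow> complex) \<Rightarrow> real" where
  "l2_sqnorm x = (\<Sum>n. w n * (norm (x n))\<^sup>2)"

lemma A2_iff: "f \<in> A2 (real b) \<longleftrightarrow> f holomorphic_on ball 0 1 \<and> l2 (taylor_coeff f)"
  unfolding A2_def l2_def w_def by simp

lemma A2_inner_eq: "A2_inner (real b) f g = l2_inner (taylor_coeff f) (taylor_coeff g)"
  unfolding A2_inner_def l2_inner_def w_def ..

lemma w_eq: "w n = fact n / pochhammer (real b + 2) n"
proof -
  have "(fact (n + b + 1) :: real) = pochhammer 1 (b + 1 + n)"
    by (simp add: pochhammer_fact add_ac)
  also have "\<dots> = pochhammer 1 (b + 1) * pochhammer (1 + of_nat (b + 1)) n"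
    by (rule pochhammer_product')
  also have "\<dots> = fact (b + 1) * pochhammer (real b + 2) n"
    by (simp add: pochhammer_fact add_ac)
  finally have "(fact (n + b + 1) :: real) = fact (b + 1) * pochhammer (real b + 2) n" .
  moreover have "Gamma (2 + real b) = fact (b + 1)"
    using Gamma_fact[of "b + 1", where 'a=real] by (simp add: add.commute)
  moreover have "Gamma (real n + 2 + real b) = fact (n + b + 1)"
    using Gamma_fact[of "n + b + 1", where 'a=real] by (simp add: algebra_simps)
  ultimately show ?thesis
    unfolding w_def bergman_weight_def by simp
qed

lemma w_pos: "w n > 0"
  unfolding w_eq by (simp add: pochhammer_pos)

lemma w_nonneg: "w n \<ge> 0" and w_nonzero: "w n \<noteq> 0"
  using w_pos[of n] by simp_all

lemma w_Suc: "w (Suc n) = w n * (real n + 1) / (real b + 2 + real n)"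
  unfolding w_eq by (simp add: pochhammer_Suc field_simps)

lemma w_antimono: "m \<le> n \<Longrightarrow> w n \<le> w m"
proof (induction n rule: dec_induct)
  case (step n)
  have "w (Suc n) \<le> w n"
    unfolding w_Suc using w_pos[of n] by (simp add: field_simps)
  with step.IH show ?case by simp
qed simp

lemma l2_add: assumes "l2 x" "l2 y" shows "l2 (\<lambda>n. x n + y n)"
  unfolding l2_def
proof (rule summable_nonneg_le)
  fix n
  have "(norm (x n + y n))\<^sup>2 \<le> (norm (x n) + norm (y n))\<^sup>2"
    by (intro power_mono norm_triangle_ineq) simp
  also have "\<dots> \<le> 2 * (norm (x n))\<^sup>2 + 2 * (norm (y n))\<^sup>2"
    using sum_squares_bound[of "norm (x n)" "norm (y n)"] by (simp add: power2_sum)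
  finally have "w n * (norm (x n + y n))\<^sup>2 \<le> w n * (2 * (norm (x n))\<^sup>2 + 2 * (norm (y n))\<^sup>2)"
    using w_pos[of n] by (intro mult_left_mono) auto
  then show "w n * (norm (x n + y n))\<^sup>2 \<le> 2 * (w n * (norm (x n))\<^sup>2) + 2 * (w n * (norm (y n))\<^sup>2)"
    by (simp add: algebra_simps)
  show "0 \<le> w n * (norm (x n + y n))\<^sup>2"
    using w_pos[of n] by simp
  show "summable (\<lambda>n. 2 * (w n * (norm (x n))\<^sup>2) + 2 * (w n * (norm (y n))\<^sup>2))"
    using assms unfolding l2_def by (intro summable_add summable_mult)
qed

lemma l2_cmult: assumes "l2 x" shows "l2 (\<lambda>n. c * x n)"
  using summable_mult[OF assms[unfolded l2_def], of "(norm c)\<^sup>2"]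
  by (simp add: l2_def norm_mult power_mult_distrib mult.left_commute)

lemma l2_diff: assumes "l2 x" "l2 y" shows "l2 (\<lambda>n. x n - y n)"
  using l2_add[OF assms(1) l2_cmult[OF assms(2), of "-1"]] by simp

lemma l2_sum: assumes "\<And>i. i \<in> I \<Longrightarrow> l2 (X i)" shows "l2 (\<lambda>n. \<Sum>i\<in>I. X i n)"
  using assms
proof (induction I rule: infinite_finite_induct)
  case (insert i I)
  then show ?case using l2_add[of "X i" "\<lambda>n. \<Sum>i\<in>I. X i n"] by simp
qed (simp_all add: l2_def)

lemma l2_finite_support: assumes "\<And>n. n \<ge> N \<Longrightarrow> x n = 0" shows "l2 x"
  unfolding l2_def by (rule summable_finite[of "{..<N}"]) (use assms in auto)

lemma l2_inner_norm_summable: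
  assumes "l2 x" "l2 y"
  shows "summable (\<lambda>n. norm (complex_of_real (w n) * x n * cnj (y n)))"
proof (rule summable_nonneg_le)
  fix n
  have "norm (complex_of_real (w n) * x n * cnj (y n)) = w n * (norm (x n) * norm (y n))"
    using w_pos[of n] by (simp add: norm_mult)
  also have "\<dots> \<le> w n * (((norm (x n))\<^sup>2 + (norm (y n))\<^sup>2) / 2)"
    using w_pos[of n] by (intro mult_left_mono mult_le_half_sum_squares) auto
  finally show "norm (complex_of_real (w n) * x n * cnj (y n))
      \<le> (w n * (norm (x n))\<^sup>2 + w n * (norm (y n))\<^sup>2) / 2"
    by (simp add: distrib_left)
  show "summable (\<lambda>n. (w n * (norm (x n))\<^sup>2 + w n * (norm (y n))\<^sup>2) / 2)"
    using assms unfolding l2_def by (intro summable_divide summable_add)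
qed simp

lemma l2_inner_sums:
  assumes "l2 x" "l2 y"
  shows "(\<lambda>n. complex_of_real (w n) * x n * cnj (y n)) sums l2_inner x y"
  using summable_norm_cancel[OF l2_inner_norm_summable[OF assms]]
  unfolding l2_inner_def by (simp add: summable_sums)

lemma l2_inner_add_left:
  assumes "l2 x" "l2 y" "l2 z"
  shows "l2_inner (\<lambda>n. x n + y n) z = l2_inner x z + l2_inner y z"
  using sums_add[OF l2_inner_sums[OF assms(1,3)] l2_inner_sums[OF assms(2,3)]]
  by (simp add: l2_inner_def sums_iff algebra_simps)

lemma l2_inner_cmult_left:
  assumes "l2 x" "l2 z"
  shows "l2_inner (\<lambda>n. c * x n) z = c * l2_inner x z"
  using sums_mult[OF l2_inner_sums[OF assms], of c]
  by (simp add: l2_inner_def sums_iff algebra_simps)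

lemma l2_inner_commute: assumes "l2 x" "l2 y" shows "l2_inner y x = cnj (l2_inner x y)"
  using sums_cnj[THEN iffD2, OF l2_inner_sums[OF assms]]
  by (simp add: l2_inner_def sums_iff mult_ac)

lemma l2_inner_cmult_right:
  assumes "l2 x" "l2 z"
  shows "l2_inner z (\<lambda>n. c * x n) = cnj c * l2_inner z x"
  using l2_inner_cmult_left[OF assms, of c] assms l2_cmult[OF assms(1)]
  by (simp add: l2_inner_commute[of _ z])

lemma l2_inner_sum_left:
  assumes "\<And>i. i \<in> I \<Longrightarrow> l2 (X i)" "l2 z"
  shows "l2_inner (\<lambda>n. \<Sum>i\<in>I. X i n) z = (\<Sum>i\<in>I. l2_inner (X i) z)"
  using assms
proof (induction I rule: infinite_finite_induct)
  case (insert i I)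
  then show ?case
    by (simp add: l2_inner_add_left l2_sum)
qed (simp_all add: l2_inner_def)

lemma l2_inner_self: assumes "l2 x" shows "l2_inner x x = complex_of_real (l2_sqnorm x)"
proof -
  have "(\<lambda>n. complex_of_real (w n) * x n * cnj (x n)) = (\<lambda>n. complex_of_real (w n * (norm (x n))\<^sup>2))"
    by (simp add: complex_norm_square mult.assoc del: of_real_power)
  moreover have "(\<Sum>n. complex_of_real (w n * (norm (x n))\<^sup>2)) = complex_of_real (l2_sqnorm x)"
    using assms unfolding l2_def l2_sqnorm_def by (rule suminf_of_real[symmetric])
  ultimately show ?thesis
    unfolding l2_inner_def by simp
qed

lemma l2_polarization:
  assumes "l2 x" "l2 y"
  shows "4 * l2_inner x y =
      complex_of_real (l2_sqnorm (\<lambda>n. x n + y n)) - complex_of_real (l2_sqnorm (\<lambda>n. x n - y n))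
    + \<i> * complex_of_real (l2_sqnorm (\<lambda>n. x n + \<i> * y n))
    - \<i> * complex_of_real (l2_sqnorm (\<lambda>n. x n - \<i> * y n))"
proof -
  let ?t = "\<lambda>v n. complex_of_real (w n) * v n * cnj (v n)"
  have l2s: "l2 (\<lambda>n. x n + y n)" "l2 (\<lambda>n. x n - y n)"
      "l2 (\<lambda>n. x n + \<i> * y n)" "l2 (\<lambda>n. x n - \<i> * y n)"
    using assms by (auto intro: l2_add l2_diff l2_cmult)
  have "(\<lambda>n. ?t (\<lambda>n. x n + y n) n - ?t (\<lambda>n. x n - y n) n + \<i> * ?t (\<lambda>n. x n + \<i> * y n) n
      - \<i> * ?t (\<lambda>n. x n - \<i> * y n) n) sums
      (l2_inner (\<lambda>n. x n + y n) (\<lambda>n. x n + y n) - l2_inner (\<lambda>n. x n - y n) (\<lambda>n. x n - y n)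
     + \<i> * l2_inner (\<lambda>n. x n + \<i> * y n) (\<lambda>n. x n + \<i> * y n)
     - \<i> * l2_inner (\<lambda>n. x n - \<i> * y n) (\<lambda>n. x n - \<i> * y n))"
    by (intro sums_diff sums_add sums_mult l2_inner_sums l2s)
  also have "(\<lambda>n. ?t (\<lambda>n. x n + y n) n - ?t (\<lambda>n. x n - y n) n + \<i> * ?t (\<lambda>n. x n + \<i> * y n) n
      - \<i> * ?t (\<lambda>n. x n - \<i> * y n) n) = (\<lambda>n. 4 * (complex_of_real (w n) * x n * cnj (y n)))"
    by (rule ext) (simp add: algebra_simps)
  finally have "(\<lambda>n. 4 * (complex_of_real (w n) * x n * cnj (y n))) sums
      (l2_inner (\<lambda>n. x n + y n) (\<lambda>n. x n + y n) - l2_inner (\<lambda>n. x n - y n) (\<lambda>n. x n - y n)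
     + \<i> * l2_inner (\<lambda>n. x n + \<i> * y n) (\<lambda>n. x n + \<i> * y n)
     - \<i> * l2_inner (\<lambda>n. x n - \<i> * y n) (\<lambda>n. x n - \<i> * y n))" .
  moreover have "(\<lambda>n. 4 * (complex_of_real (w n) * x n * cnj (y n))) sums (4 * l2_inner x y)"
    by (intro sums_mult l2_inner_sums assms)
  ultimately show ?thesis
    using l2s by (simp add: sums_unique2 l2_inner_self)
qed

definition basis_vec :: "nat \<Rightarrow> nat \<Rightarrow> complex" where
  "basis_vec k = (\<lambda>n. if n = k then 1 else 0)"

lemma l2_basis_vec: "l2 (basis_vec k)"
  by (rule l2_finite_support[of "Suc k"]) (simp add: basis_vec_def)

lemma l2_inner_basis_vec_left:
  assumes "l2 x" shows "l2_inner (basis_vec k) x = complex_of_real (w k) * cnj (x k)"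
proof -
  have "(\<lambda>n. complex_of_real (w n) * basis_vec k n * cnj (x n))
      = (\<lambda>n. if n = k then complex_of_real (w k) * cnj (x k) else 0)"
    by (auto simp: basis_vec_def)
  then show ?thesis
    using sums_single[of k "\<lambda>_. complex_of_real (w k) * cnj (x k)"]
    by (simp add: l2_inner_def sums_iff)
qed

definition shift :: "nat \<Rightarrow> (nat \<Rightarrow> complex) \<Rightarrow> nat \<Rightarrow> complex" where
  "shift k x i = (if k \<le> i then x (i - k) else 0)"

definition shift_adj :: "nat \<Rightarrow> (nat \<Rightarrow> complex) \<Rightarrow> nat \<Rightarrow> complex" where
  "shift_adj k y m = complex_of_real (w (m + k) / w m) * y (m + k)"

lemma l2_shift: assumes "l2 x" shows "l2 (shift k x)"
  unfolding l2_def
proof (rule summable_nonneg_le[where g = "\<lambda>i. if k \<le> i then w (i - k) * (norm (x (i - k)))\<^sup>2 else 0"])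
  show "summable (\<lambda>i. if k \<le> i then w (i - k) * (norm (x (i - k)))\<^sup>2 else 0)"
    using assms unfolding l2_def by (subst summable_iff_shift[symmetric, of _ k]) simp
  show "w i * (norm (shift k x i))\<^sup>2 \<le> (if k \<le> i then w (i - k) * (norm (x (i - k)))\<^sup>2 else 0)" for i
    using w_antimono[of "i - k" i] by (simp add: shift_def mult_right_mono)
qed (simp add: w_nonneg)

lemma l2_shift_adj: assumes "l2 y" shows "l2 (shift_adj k y)"
  unfolding l2_def
proof (rule summable_nonneg_le[where g = "\<lambda>m. w (m + k) * (norm (y (m + k)))\<^sup>2"])
  show "summable (\<lambda>m. w (m + k) * (norm (y (m + k)))\<^sup>2)"
    using assms unfolding l2_def by (subst summable_iff_shift)
  fix m
  define r where "r = w (m + k) / w m"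
  have r: "0 < r" "r \<le> 1"
    using w_antimono[of m "m + k"] w_pos[of m] w_pos[of "m + k"] by (auto simp: r_def)
  have "w m * (norm (shift_adj k y m))\<^sup>2 = w m * r * r * (norm (y (m + k)))\<^sup>2"
    using r by (simp add: shift_adj_def r_def[symmetric] norm_mult power2_eq_square)
  also have "\<dots> \<le> w m * r * (norm (y (m + k)))\<^sup>2"
    using r w_pos[of m] by (intro mult_right_mono) (auto simp: mult_le_cancel_left1)
  also have "\<dots> = w (m + k) * (norm (y (m + k)))\<^sup>2"
    using w_pos[of m] by (simp add: r_def)
  finally show "w m * (norm (shift_adj k y m))\<^sup>2 \<le> w (m + k) * (norm (y (m + k)))\<^sup>2" .
qed (simp add: w_nonneg)

lemma l2_inner_shift: assumes "l2 x" "l2 y" shows "l2_inner (shift k x) y = l2_inner x (shift_adj k y)"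
proof -
  have "(\<lambda>i. complex_of_real (w (i + k)) * shift k x (i + k) * cnj (y (i + k))) =
      (\<lambda>m. complex_of_real (w m) * x m * cnj (shift_adj k y m))"
    by (simp add: shift_def shift_adj_def field_simps w_nonzero)
  then have "(\<lambda>i. complex_of_real (w i) * shift k x i * cnj (y i)) sums l2_inner x (shift_adj k y)"
    using l2_inner_sums[OF assms(1) l2_shift_adj[OF assms(2)]]
    by (subst sums_zero_iff_shift[symmetric, of k]) (simp_all add: shift_def)
  then show ?thesis
    using l2_inner_sums[OF l2_shift[OF assms(1)] assms(2)] sums_unique2 by blast
qed

end

section \<open>The unitary weighted composition operator of \<open>\<phi>\<^sub>\<alpha>\<close>\<close>

locale mobius_involution = bergman_coeffs +
  fixes a :: complex
  assumes norm_a_less: "norm a < 1"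
begin

definition \<gamma> :: nat where
  "\<gamma> = b + 2"

definition c0 :: real where
  "c0 = sqrt (1 - (norm a)\<^sup>2) ^ \<gamma>"

definition phi :: "complex \<Rightarrow> complex" where
  "phi = mobius_phi a"

definition ka :: "complex \<Rightarrow> complex" where
  "ka z = complex_of_real c0 / (1 - cnj a * z) ^ \<gamma>"

definition qa :: "complex \<Rightarrow> complex" where
  "qa z = (1 - cnj a * z) ^ \<gamma> / complex_of_real c0"

definition U :: "(complex \<Rightarrow> complex) \<Rightarrow> complex \<Rightarrow> complex" where
  "U f z = f (phi z) * ka z"

text \<open>The matrix of \<open>U\<close> in the monomial basis: column \<open>n\<close> holds the coefficients of \<open>U z\<^sup>n\<close>.\<close>

definition u :: "nat \<Rightarrow> nat \<Rightarrow> complex" where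
  "u j n = taylor_coeff (\<lambda>z. ka z * phi z ^ n) j"

lemma one_minus_norm_a_sq_pos: "1 - (norm a)\<^sup>2 > 0"
  using norm_a_less by (simp add: abs_square_less_1)

lemma c0_pos: "c0 > 0"
  unfolding c0_def using one_minus_norm_a_sq_pos by simp

lemma c0_sq: "c0\<^sup>2 = (1 - (norm a)\<^sup>2) ^ \<gamma>"
proof -
  have "c0\<^sup>2 = ((sqrt (1 - (norm a)\<^sup>2))\<^sup>2) ^ \<gamma>"
    unfolding c0_def by (simp only: power_mult[symmetric] mult.commute)
  then show ?thesis
    using one_minus_norm_a_sq_pos by simp
qed

lemma norm_a_sq_ne_1: "(complex_of_real (norm a))\<^sup>2 \<noteq> 1"
proof
  assume "(complex_of_real (norm a))\<^sup>2 = 1"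
  then have "(norm a)\<^sup>2 = 1"
    by (simp only: of_real_power[symmetric] of_real_eq_1_iff)
  with one_minus_norm_a_sq_pos show False by simp
qed

lemma norm_den_ge: "norm z \<le> t \<Longrightarrow> norm (1 - cnj a * z) \<ge> 1 - norm a * t"
  using norm_triangle_ineq2[of 1 "cnj a * z"] mult_left_mono[of "norm z" t "norm a"]
  by (simp add: norm_mult)

lemma den_nonzero: "norm z < 1 \<Longrightarrow> 1 - cnj a * z \<noteq> 0"
  using norm_den_ge[of z "norm z"] norm_a_less mult_strict_mono'[of "norm a" 1 "norm z" 1]
  by auto

lemma phi_eq: "phi z = (a - z) / (1 - cnj a * z)"
  unfolding phi_def mobius_phi_def ..

lemma phi_holomorphic: "phi holomorphic_on ball 0 1"
  unfolding phi_eq[abs_def] by (intro holomorphic_intros) (use den_nonzero in auto)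

lemma ka_holomorphic: "ka holomorphic_on ball 0 1"
  unfolding ka_def[abs_def] by (intro holomorphic_intros) (use den_nonzero in auto)

lemma qa_holomorphic: "qa holomorphic_on A"
  unfolding qa_def[abs_def] using c0_pos by (intro holomorphic_intros) auto

lemma qa_ka: "norm z < 1 \<Longrightarrow> qa z * ka z = 1"
  unfolding qa_def ka_def using c0_pos den_nonzero by simp

lemma norm_den_sq_minus:
  "(norm (1 - cnj a * z))\<^sup>2 - (norm (a - z))\<^sup>2 = (1 - (norm a)\<^sup>2) * (1 - (norm z)\<^sup>2)"
proof -
  have "complex_of_real ((norm (1 - cnj a * z))\<^sup>2 - (norm (a - z))\<^sup>2) =
        (1 - cnj a * z) * cnj (1 - cnj a * z) - (a - z) * cnj (a - z)"
    by (simp only: of_real_diff complex_norm_square)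
  also have "\<dots> = 1 - cnj a * a - cnj z * z + (cnj a * a) * (cnj z * z)"
    by (simp add: algebra_simps)
  also have "\<dots> = complex_of_real ((1 - (norm a)\<^sup>2) * (1 - (norm z)\<^sup>2))"
    by (simp add: cnj_mult_self algebra_simps)
  finally show ?thesis
    by (simp only: of_real_eq_iff)
qed

lemma phi_in_ball: assumes "norm z < 1" shows "norm (phi z) < 1"
proof -
  have "(1 - (norm a)\<^sup>2) * (1 - (norm z)\<^sup>2) > 0"
    using one_minus_norm_a_sq_pos assms by (simp add: abs_square_less_1)
  then have "(norm (a - z))\<^sup>2 < (norm (1 - cnj a * z))\<^sup>2"
    using norm_den_sq_minus[of z] by linarith
  then have "norm (a - z) < norm (1 - cnj a * z)"
    using power_less_imp_less_base by fastforce
  then show ?thesis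
    using den_nonzero[OF assms] by (simp add: phi_eq norm_divide divide_less_eq)
qed

lemma den_phi:
  assumes "norm z < 1"
  shows "1 - cnj a * phi z = complex_of_real (1 - (norm a)\<^sup>2) / (1 - cnj a * z)"
proof -
  have "1 - cnj a * phi z = ((1 - cnj a * z) - cnj a * (a - z)) / (1 - cnj a * z)"
    using den_nonzero[OF assms] unfolding phi_eq by (simp add: field_simps)
  also have "(1 - cnj a * z) - cnj a * (a - z) = complex_of_real (1 - (norm a)\<^sup>2)"
    by (simp add: algebra_simps cnj_mult_self)
  finally show ?thesis .
qed

lemma phi_phi: assumes "norm z < 1" shows "phi (phi z) = z"
proof -
  have "a - phi z = z * complex_of_real (1 - (norm a)\<^sup>2) / (1 - cnj a * z)"
    using den_nonzero[OF assms] unfolding phi_eq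
    by (simp add: field_simps cnj_mult_self)
  then show ?thesis
    using norm_a_sq_ne_1 den_nonzero[OF assms]
    by (simp add: phi_eq[of "phi z"] den_phi[OF assms])
qed

lemma ka_phi_ka: assumes "norm z < 1" shows "ka (phi z) * ka z = 1"
proof -
  have "ka (phi z) * ka z = complex_of_real (c0\<^sup>2) / complex_of_real ((1 - (norm a)\<^sup>2) ^ \<gamma>)"
    using den_nonzero[OF assms] norm_a_sq_ne_1
    by (simp add: ka_def den_phi[OF assms] power_divide power2_eq_square)
  then show ?thesis
    using one_minus_norm_a_sq_pos norm_a_sq_ne_1 by (simp add: c0_sq)
qed

lemma U_U: assumes "norm z < 1" shows "U (U f) z = f z"
proof -
  have "U (U f) z = f (phi (phi z)) * (ka (phi z) * ka z)"
    unfolding U_def by (simp only: mult.assoc)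
  then show ?thesis
    using assms by (simp add: phi_phi ka_phi_ka)
qed

lemma comp_phi_holomorphic:
  assumes "f holomorphic_on ball 0 1" shows "(\<lambda>z. f (phi z)) holomorphic_on ball 0 1"
proof -
  have "phi ` ball 0 1 \<subseteq> ball 0 1"
    using phi_in_ball by auto
  from holomorphic_on_compose_gen[OF phi_holomorphic assms this] show ?thesis
    by (simp add: o_def)
qed

lemma U_holomorphic: assumes "f holomorphic_on ball 0 1" shows "U f holomorphic_on ball 0 1"
  unfolding U_def[abs_def]
  by (intro holomorphic_intros comp_phi_holomorphic assms ka_holomorphic)

text \<open>Cauchy estimates for \<open>u\<close> on the circle of radius \<open>s0\<close>, which \<open>\<phi>\<^sub>\<alpha>\<close> maps into the
  disc of radius \<open>M0 < 1\<close>.\<close>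

definition s0 :: real where "s0 = (1 - norm a) / 4"
definition M0 :: real where "M0 = (norm a + s0) / (1 - norm a * s0)"
definition K0 :: real where "K0 = c0 / (1 - norm a) ^ \<gamma>"

lemma s0_pos: "s0 > 0"
  using norm_a_less by (simp add: s0_def)

lemma s0_less_1: "s0 < 1"
  by (simp add: s0_def) (use norm_ge_zero[of a] in linarith)

lemma norm_a_s0_less_1: "norm a * s0 < 1"
  using mult_strict_mono'[of "norm a" 1 s0 1] norm_a_less s0_pos s0_less_1 by simp

lemma M0_nonneg: "M0 \<ge> 0"
  unfolding M0_def using norm_a_s0_less_1 s0_pos by simp

lemma M0_less_1: "M0 < 1"
proof -
  have "s0 * (1 + norm a) = (1 - norm a) * ((1 + norm a) / 4)"
    unfolding s0_def by simp
  also have "\<dots> < 1 - norm a"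
    using norm_a_less mult_strict_left_mono[of "(1 + norm a) / 4" 1 "1 - norm a"] by simp
  finally show ?thesis
    unfolding M0_def using norm_a_s0_less_1 by (simp add: algebra_simps)
qed

lemma norm_phi_le: assumes "norm z \<le> s0" shows "norm (phi z) \<le> M0"
proof -
  have "norm (a - z) \<le> norm a + s0"
    using norm_triangle_ineq4[of a z] assms by linarith
  moreover have "1 - norm a * s0 \<le> norm (1 - cnj a * z)"
    by (rule norm_den_ge[OF assms])
  ultimately show ?thesis
    unfolding M0_def phi_eq norm_divide
    using norm_a_s0_less_1 s0_pos by (intro frac_le) auto
qed

lemma norm_ka_le: assumes "norm z \<le> 1" shows "norm (ka z) \<le> K0"
proof -
  have den: "1 - norm a \<le> norm (1 - cnj a * z)" "0 < 1 - norm a"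
    using norm_den_ge[OF assms] norm_a_less by auto
  have "norm (ka z) = c0 / norm (1 - cnj a * z) ^ \<gamma>"
    unfolding ka_def using c0_pos by (simp add: norm_divide norm_power)
  also have "\<dots> \<le> c0 / (1 - norm a) ^ \<gamma>"
    using den c0_pos by (intro divide_left_mono power_mono mult_pos_pos zero_less_power) auto
  finally show ?thesis unfolding K0_def .
qed

lemma norm_u_le: "norm (u j n) \<le> K0 * M0 ^ n / s0 ^ j"
proof -
  let ?g = "\<lambda>z. ka z * phi z ^ n"
  have holo: "?g holomorphic_on ball 0 1"
    by (intro holomorphic_intros ka_holomorphic phi_holomorphic)
  have sub: "cball 0 s0 \<subseteq> ball (0::complex) 1"
    using s0_less_1 by auto
  have "norm ((deriv ^^ j) ?g 0) \<le> fact j * (K0 * M0 ^ n) / s0 ^ j"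
  proof (rule Cauchy_inequality)
    show "?g holomorphic_on ball 0 s0"
      using holo by (rule holomorphic_on_subset) (use sub in auto)
    show "continuous_on (cball 0 s0) ?g"
      using holomorphic_on_imp_continuous_on[OF holo] sub by (rule continuous_on_subset)
    fix x :: complex assume "norm (0 - x) = s0"
    then have "norm (ka x) \<le> K0" "norm (phi x) ^ n \<le> M0 ^ n"
      using s0_less_1 norm_phi_le[of x] by (auto intro!: norm_ka_le power_mono)
    then show "norm (?g x) \<le> K0 * M0 ^ n"
      by (simp add: norm_mult norm_power mult_mono')
  qed (rule s0_pos)
  then show ?thesis
    unfolding u_def taylor_coeff_def by (simp add: norm_divide field_simps)
qed

lemma u_row_abs_summable:
  assumes "f holomorphic_on ball 0 1"
  shows "summable (\<lambda>n. norm (u j n) * norm (taylor_coeff f n))"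
proof (rule summable_nonneg_le[where g = "\<lambda>n. K0 / s0 ^ j * (norm (taylor_coeff f n) * M0 ^ n)"])
  fix n
  show "0 \<le> norm (u j n) * norm (taylor_coeff f n)"
    by simp
  show "norm (u j n) * norm (taylor_coeff f n) \<le> K0 / s0 ^ j * (norm (taylor_coeff f n) * M0 ^ n)"
    using mult_right_mono[OF norm_u_le[of j n], of "norm (taylor_coeff f n)"] by (simp add: mult_ac)
next
  show "summable (\<lambda>n. K0 / s0 ^ j * (norm (taylor_coeff f n) * M0 ^ n))"
    using taylor_coeff_abs_summable[OF assms M0_nonneg M0_less_1] by (rule summable_mult)
qed

lemma u_row_summable:
  assumes "f holomorphic_on ball 0 1"
  shows "summable (\<lambda>n. u j n * taylor_coeff f n)"
  by (rule summable_norm_cancel) (use u_row_abs_summable[OF assms, of j] in \<open>simp add: norm_mult\<close>)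

lemma U_sums_u_coeffs:
  assumes f: "f holomorphic_on ball 0 1" and z: "norm z < s0"
  shows "(\<lambda>j. (\<Sum>n. u j n * taylor_coeff f n) * z ^ j) sums U f z"
proof -
  define F where "F = taylor_coeff f"
  define G where "G n j = F n * (u j n * z ^ j)" for n j
  have z1: "norm z < 1"
    using z s0_less_1 by simp
  have "norm (G n j) \<le> (norm (F n) * M0 ^ n * K0) * (norm z / s0) ^ j" for n j
  proof -
    have "norm (G n j) = norm (F n) * (norm (u j n) * norm z ^ j)"
      by (simp add: G_def norm_mult norm_power)
    also have "\<dots> \<le> norm (F n) * ((K0 * M0 ^ n / s0 ^ j) * norm z ^ j)"
      by (intro mult_left_mono mult_right_mono norm_u_le) auto
    finally show ?thesis
      by (simp add: power_divide mult_ac)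
  qed
  moreover have "summable (\<lambda>n. norm (F n) * M0 ^ n * K0)"
    unfolding F_def by (intro summable_mult2 taylor_coeff_abs_summable f M0_nonneg M0_less_1)
  ultimately have swap: "(\<lambda>j. \<Sum>n. G n j) sums (\<Sum>n. \<Sum>j. G n j)"
    using z s0_pos by (intro sums_suminf_swap_dominated) auto
  have "(\<Sum>j. G n j) = F n * phi z ^ n * ka z" for n
  proof -
    have "(\<lambda>z. ka z * phi z ^ n) holomorphic_on ball 0 1"
      by (intro holomorphic_intros ka_holomorphic phi_holomorphic)
    from sums_mult[OF taylor_coeff_sums[OF this], of z "F n"] z1 show ?thesis
      by (simp add: G_def u_def sums_iff mult_ac)
  qed
  then have "(\<lambda>n. \<Sum>j. G n j) sums U f z"
    using sums_mult2[OF taylor_coeff_sums[OF f, of "phi z"], of "ka z"] phi_in_ball[OF z1]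
    by (simp add: U_def F_def)
  then have "(\<Sum>n. \<Sum>j. G n j) = U f z"
    by (rule sums_unique[symmetric])
  moreover have "(\<Sum>n. G n j) = (\<Sum>n. u j n * F n) * z ^ j" for j
    using sums_mult2[OF summable_sums[OF u_row_summable[OF f, of j]], of "z ^ j"]
    by (simp add: G_def F_def sums_iff mult_ac)
  ultimately show ?thesis
    using swap by (simp add: F_def)
qed

lemma taylor_coeff_U:
  assumes "f holomorphic_on ball 0 1"
  shows "taylor_coeff (U f) j = (\<Sum>n. u j n * taylor_coeff f n)"
  using taylor_coeff_unique[OF s0_pos U_sums_u_coeffs[OF assms]] by simp

definition qc :: "nat \<Rightarrow> complex" where
  "qc = taylor_coeff qa"

lemma qc_eq_0: assumes "i > \<gamma>" shows "qc i = 0"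
proof -
  have qa_poly: "qa = (\<lambda>z. \<Sum>k\<le>\<gamma>. (of_nat (\<gamma> choose k) * (- cnj a) ^ k / complex_of_real c0) * z ^ k)"
  proof
    fix z
    have "qa z = (\<Sum>k\<le>\<gamma>. of_nat (\<gamma> choose k) * (- cnj a * z) ^ k * 1 ^ (\<gamma> - k)) / complex_of_real c0"
      unfolding qa_def using binomial_ring[of "- cnj a * z" 1 \<gamma>] by simp
    then show "qa z = (\<Sum>k\<le>\<gamma>. (of_nat (\<gamma> choose k) * (- cnj a) ^ k / complex_of_real c0) * z ^ k)"
      unfolding sum_divide_distrib
      by (simp only: power_mult_distrib power_one mult_1_right times_divide_eq_left mult.assoc)
  qed
  show ?thesis
    using assms unfolding qc_def qa_poly taylor_coeff_poly by simp
qed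

lemma taylor_coeff_comp_phi:
  assumes "f holomorphic_on ball 0 1"
  shows "taylor_coeff (\<lambda>z. f (phi z)) i = (\<Sum>k=0..i. qc k * taylor_coeff (U f) (i - k))"
proof -
  have "taylor_coeff (\<lambda>z. f (phi z)) i = taylor_coeff (\<lambda>z. qa z * U f z) i"
    by (rule taylor_coeff_cong[of 1]) (auto simp: U_def mult.assoc[symmetric] qa_ka)
  also have "\<dots> = (\<Sum>k=0..i. qc k * taylor_coeff (U f) (i - k))"
    unfolding qc_def by (rule taylor_coeff_mult[OF qa_holomorphic U_holomorphic[OF assms]]) simp
  finally show ?thesis .
qed

definition uterm :: "nat \<Rightarrow> nat \<Rightarrow> nat \<Rightarrow> complex" where
  "uterm n j i = of_nat (n choose i) * a ^ (n - i) * (-1) ^ i *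
     (cnj a ^ (j - i) * of_nat (pochhammer (n + \<gamma>) (j - i)) / fact (j - i))"

lemma u_eq_sum: "u j n = complex_of_real c0 * (\<Sum>i\<in>{0..min j n}. uterm n j i)"
proof -
  let ?p = "\<lambda>z. (a - z) ^ n" and ?q = "\<lambda>z. inverse ((1 - cnj a * z) ^ (n + \<gamma>))"
  have holo: "?p holomorphic_on ball 0 1" "?q holomorphic_on ball 0 1"
    by (intro holomorphic_intros; use den_nonzero in auto)+
  have "u j n = taylor_coeff (\<lambda>z. complex_of_real c0 * (?p z * ?q z)) j"
    unfolding u_def
  proof (rule taylor_coeff_cong[of 1])
    fix z :: complex assume "z \<in> ball 0 1"
    then have "1 - cnj a * z \<noteq> 0"
      by (intro den_nonzero) simp
    then show "ka z * phi z ^ n = complex_of_real c0 * (?p z * ?q z)"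
      by (simp add: ka_def phi_eq power_divide power_add divide_inverse power_mult_distrib
          power_inverse mult_ac)
  qed simp
  also have "\<dots> = complex_of_real c0 * (\<Sum>i=0..j. taylor_coeff ?p i * taylor_coeff ?q (j - i))"
    using holo by (simp add: taylor_coeff_cmult[of _ 1] taylor_coeff_mult[of _ 1] holomorphic_intros)
  also have "(\<Sum>i=0..j. taylor_coeff ?p i * taylor_coeff ?q (j - i)) = (\<Sum>i=0..j. if i \<le> n then uterm n j i else 0)"
    unfolding taylor_coeff_binomial taylor_coeff_inverse_power uterm_def
    by (intro sum.cong refl) (simp add: mult_ac)
  also have "\<dots> = (\<Sum>i\<in>{0..min j n}. uterm n j i)"
    by (subst sum.mono_neutral_right[of "{0..j}" "{0..min j n}"]) auto
  finally show ?thesis .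
qed

lemma w_eq_pochhammer_\<gamma>: "w n = fact n / real (pochhammer \<gamma> n)"
  unfolding w_eq \<gamma>_def by (simp add: pochhammer_of_nat[symmetric] add.commute)

lemma w_uterm_coeff_symmetric:
  assumes "i \<le> j" "i \<le> n"
  shows "w j * (real (n choose i) * real (pochhammer (n + \<gamma>) (j - i)) / fact (j - i)) =
         w n * (real (j choose i) * real (pochhammer (j + \<gamma>) (n - i)) / fact (n - i))"
proof -
  define Pj Pn where "Pj = real (pochhammer \<gamma> j)" and "Pn = real (pochhammer \<gamma> n)"
  define Pj' Pn' where "Pj' = real (pochhammer (j + \<gamma>) (n - i))"
    and "Pn' = real (pochhammer (n + \<gamma>) (j - i))"
  have pos: "Pj > 0" "Pn > 0"
    unfolding Pj_def Pn_def \<gamma>_def by (simp_all add: pochhammer_pos)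
  have "pochhammer \<gamma> (j + (n - i)) = pochhammer \<gamma> (n + (j - i))"
    using assms by (simp add: add.commute)
  then have "Pj * Pj' = Pn * Pn'"
    unfolding Pj_def Pn_def Pj'_def Pn'_def pochhammer_product'
    by (simp add: add.commute flip: of_nat_mult)
  then have Pn': "Pn' = Pj * Pj' / Pn"
    using pos by (simp add: field_simps)
  have binomials: "real (n choose i) = fact n / (fact i * fact (n - i))"
      "real (j choose i) = fact j / (fact i * fact (j - i))"
    using binomial_fact[OF assms(2)] binomial_fact[OF assms(1)] by simp_all
  show ?thesis
    unfolding binomials w_eq_pochhammer_\<gamma> Pj_def[symmetric] Pn_def[symmetric] Pj'_def[symmetric]
      Pn'_def[symmetric] Pn'
    using pos by (simp add: field_simps)
qed

lemma w_uterm_symmetric: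
  assumes "i \<le> j" "i \<le> n"
  shows "complex_of_real (w j) * uterm n j i = complex_of_real (w n) * cnj (uterm j n i)"
proof -
  have "complex_of_real (w j) * uterm n j i =
      complex_of_real (w j * (real (n choose i) * real (pochhammer (n + \<gamma>) (j - i)) / fact (j - i))) *
      (a ^ (n - i) * (-1) ^ i * cnj a ^ (j - i))"
    unfolding uterm_def by (simp add: mult_ac)
  also have "\<dots> = complex_of_real (w n * (real (j choose i) * real (pochhammer (j + \<gamma>) (n - i)) / fact (n - i))) *
      (a ^ (n - i) * (-1) ^ i * cnj a ^ (j - i))"
    by (simp only: w_uterm_coeff_symmetric[OF assms])
  also have "\<dots> = complex_of_real (w n) * cnj (uterm j n i)"
    unfolding uterm_def by (simp add: mult_ac)
  finally show ?thesis .
qed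

lemma w_u_symmetric: "complex_of_real (w j) * u j n = complex_of_real (w n) * cnj (u n j)"
proof -
  have "complex_of_real (w j) * u j n =
      complex_of_real c0 * (\<Sum>i\<in>{0..min j n}. complex_of_real (w j) * uterm n j i)"
    unfolding u_eq_sum by (simp add: sum_distrib_left mult_ac)
  also have "\<dots> = complex_of_real c0 * (\<Sum>i\<in>{0..min j n}. complex_of_real (w n) * cnj (uterm j n i))"
    by (intro arg_cong[where f="\<lambda>x. complex_of_real c0 * x"] sum.cong refl w_uterm_symmetric) auto
  also have "\<dots> = complex_of_real (w n) * cnj (u n j)"
    unfolding u_eq_sum by (simp add: sum_distrib_left mult_ac min.commute)
  finally show ?thesis .
qed

section \<open>\<open>U\<close> acting on coefficient sequences\<close>

definition U_seq :: "(nat \<Rightarrow> complex) \<Rightarrow> nat \<Rightarrow> complex" where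
  "U_seq x j = (\<Sum>n. u j n * x n)"

definition fun_of_coeffs :: "(nat \<Rightarrow> complex) \<Rightarrow> complex \<Rightarrow> complex" where
  "fun_of_coeffs x z = (\<Sum>n. x n * z ^ n)"

text \<open>\<open>1 / w n\<close> are the Taylor coefficients of \<open>(1 - z)\<^sup>-\<^sup>\<gamma>\<close>.\<close>

lemma summable_power_divide_w:
  assumes "0 \<le> t" "t < 1"
  shows "summable (\<lambda>n. t ^ n / w n)"
proof -
  have "(\<lambda>z. inverse ((1 - 1 * z) ^ \<gamma>)) holomorphic_on ball 0 1"
    by (intro holomorphic_intros) auto
  from taylor_coeff_abs_summable[OF this assms] show ?thesis
    unfolding taylor_coeff_inverse_power using w_pos
    by (simp add: w_eq_pochhammer_\<gamma> norm_divide mult_ac)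
qed

lemma l2_power_series_abs_summable:
  assumes "l2 x" "norm z < 1"
  shows "summable (\<lambda>n. norm (x n * z ^ n))"
proof (rule summable_nonneg_le)
  fix n
  have "norm (x n * z ^ n) = (sqrt (w n) * norm (x n)) * (norm z ^ n / sqrt (w n))"
    using w_pos[of n] by (simp add: norm_mult norm_power)
  also have "\<dots> \<le> ((sqrt (w n) * norm (x n))\<^sup>2 + (norm z ^ n / sqrt (w n))\<^sup>2) / 2"
    by (rule mult_le_half_sum_squares)
  also have "\<dots> = (w n * (norm (x n))\<^sup>2 + (norm z * norm z) ^ n / w n) / 2"
  proof -
    have sqrt_w: "(sqrt (w n))\<^sup>2 = w n"
      using w_pos[of n] by simp
    have "(norm z ^ n / sqrt (w n))\<^sup>2 = (norm z * norm z) ^ n / w n"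
      unfolding power_divide sqrt_w by (simp only: power2_eq_square power_mult_distrib)
    then show ?thesis
      unfolding power_mult_distrib sqrt_w by simp
  qed
  finally show "norm (x n * z ^ n) \<le> (w n * (norm (x n))\<^sup>2 + (norm z * norm z) ^ n / w n) / 2" .
  have "norm z * norm z < 1"
    using assms(2) mult_strict_mono'[of "norm z" 1 "norm z" 1] by simp
  then show "summable (\<lambda>n. (w n * (norm (x n))\<^sup>2 + (norm z * norm z) ^ n / w n) / 2)"
    using assms(1) unfolding l2_def by (intro summable_divide summable_add summable_power_divide_w) auto
qed simp

lemma fun_of_coeffs_sums:
  assumes "l2 x" "norm z < 1"
  shows "(\<lambda>n. x n * z ^ n) sums fun_of_coeffs x z"
  using summable_norm_cancel[OF l2_power_series_abs_summable[OF assms]]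
  unfolding fun_of_coeffs_def by (simp add: summable_sums)

lemma fun_of_coeffs_holomorphic:
  assumes "l2 x" shows "fun_of_coeffs x holomorphic_on ball 0 1"
proof -
  have radius: "1 \<le> fps_conv_radius (Abs_fps x)"
    unfolding fps_conv_radius_def
  proof (rule conv_radius_geI_ex')
    fix r :: real assume "0 < r" "ereal r < 1"
    then show "summable (\<lambda>n. fps_nth (Abs_fps x) n * complex_of_real r ^ n)"
      using summable_norm_cancel[OF l2_power_series_abs_summable[OF assms, of "of_real r"]] by simp
  qed
  have "ball 0 1 \<subseteq> eball (0::complex) (fps_conv_radius (Abs_fps x))"
  proof
    fix z :: complex assume "z \<in> ball 0 1"
    then have "ereal (norm z) < 1"
      by simp
    from order.strict_trans2[OF this radius] show "z \<in> eball 0 (fps_conv_radius (Abs_fps x))"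
      by simp
  qed
  moreover have "eval_fps (Abs_fps x) = fun_of_coeffs x"
    by (simp add: eval_fps_def fun_of_coeffs_def fun_eq_iff)
  ultimately show ?thesis
    using holomorphic_on_eval_fps by metis
qed

lemma taylor_coeff_fun_of_coeffs: "l2 x \<Longrightarrow> taylor_coeff (fun_of_coeffs x) n = x n"
  by (rule taylor_coeff_unique[of 1]) (auto intro: fun_of_coeffs_sums)

lemma U_seq_taylor_coeff:
  "f holomorphic_on ball 0 1 \<Longrightarrow> U_seq (taylor_coeff f) = taylor_coeff (U f)"
  by (auto simp: U_seq_def taylor_coeff_U)

lemma U_seq_summable: "l2 x \<Longrightarrow> summable (\<lambda>n. u j n * x n)"
  using u_row_summable[OF fun_of_coeffs_holomorphic] by (simp add: taylor_coeff_fun_of_coeffs)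

lemma U_seq_U_seq: assumes "l2 x" shows "U_seq (U_seq x) = x"
proof -
  let ?f = "fun_of_coeffs x"
  have holo: "?f holomorphic_on ball 0 1"
    by (rule fun_of_coeffs_holomorphic[OF assms])
  have "U_seq (U_seq (taylor_coeff ?f)) = taylor_coeff (U (U ?f))"
    using holo U_holomorphic[OF holo] by (simp add: U_seq_taylor_coeff)
  also have "\<dots> = taylor_coeff ?f"
    by (intro ext taylor_coeff_cong[of 1]) (auto simp: U_U)
  moreover have "taylor_coeff ?f = x"
    using assms by (auto simp: taylor_coeff_fun_of_coeffs)
  ultimately show ?thesis
    by simp
qed

lemma basis_vec_eq_taylor_coeff: "basis_vec n = taylor_coeff (\<lambda>z. z ^ n)"
  unfolding basis_vec_def taylor_coeff_monom by auto

lemma U_seq_basis_vec: "U_seq (basis_vec n) = (\<lambda>j. u j n)"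
proof
  fix j
  have "(\<lambda>m. u j m * basis_vec n m) = (\<lambda>m. if m = n then u j n else 0)"
    by (auto simp: basis_vec_def)
  then show "U_seq (basis_vec n) j = u j n"
    using sums_single[of n "\<lambda>_. u j n"] by (simp add: U_seq_def sums_iff)
qed

text \<open>This is \<open>U\<^sup>2 = I\<close> combined with the symmetry \<open>w\<^sub>j u\<^sub>j\<^sub>n = w\<^sub>n cnj u\<^sub>n\<^sub>j\<close>.\<close>

lemma u_columns_orthogonal:
  "(\<lambda>j. complex_of_real (w j) * u j n * cnj (u j n')) sums (if n = n' then complex_of_real (w n) else 0)"
proof -
  have pow_holo: "(\<lambda>z. z ^ n) holomorphic_on ball 0 1"
    by (intro holomorphic_intros)
  from U_seq_taylor_coeff[OF this] have col: "(\<lambda>j. u j n) = taylor_coeff (U (\<lambda>z. z ^ n))"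
    by (simp add: U_seq_basis_vec flip: basis_vec_eq_taylor_coeff)
  have "summable (\<lambda>j. u n' j * u j n)"
    using u_row_summable[OF U_holomorphic[OF pow_holo], of n'] by (simp add: col[symmetric])
  then have "(\<lambda>j. u n' j * u j n) sums U_seq (\<lambda>j. u j n) n'"
    by (simp add: U_seq_def summable_sums)
  also have "U_seq (\<lambda>j. u j n) n' = basis_vec n n'"
    using U_seq_U_seq[OF l2_basis_vec] by (simp add: U_seq_basis_vec)
  finally have "(\<lambda>j. complex_of_real (w n') * (u n' j * u j n)) sums (complex_of_real (w n') * basis_vec n n')"
    by (rule sums_mult)
  moreover have "complex_of_real (w n') * (u n' j * u j n) = complex_of_real (w j) * u j n * cnj (u j n')" for j
    using arg_cong[OF w_u_symmetric[of j n'], of cnj] by (simp add: mult_ac)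
  ultimately show ?thesis
    by (auto simp: basis_vec_def)
qed

lemma U_seq_isometric_finite:
  "(\<lambda>j. w j * (norm (\<Sum>n<N. u j n * x n))\<^sup>2) sums (\<Sum>n<N. w n * (norm (x n))\<^sup>2)"
proof -
  let ?c = "\<lambda>j n n'. complex_of_real (w j) * u j n * cnj (u j n')"
  have expand: "complex_of_real (w j * (norm (\<Sum>n<N. u j n * x n))\<^sup>2) =
      (\<Sum>n<N. \<Sum>n'<N. x n * cnj (x n') * ?c j n n')" for j
  proof -
    let ?s = "\<Sum>n<N. u j n * x n"
    have "complex_of_real (w j * (norm ?s)\<^sup>2) = complex_of_real (w j) * (?s * cnj ?s)"
      by (simp only: of_real_mult of_real_power cnj_mult_self)
    also have "\<dots> = complex_of_real (w j) * (?s * (\<Sum>n'<N. cnj (u j n') * cnj (x n')))"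
      by (simp add: cnj_sum)
    also have "\<dots> = (\<Sum>n<N. \<Sum>n'<N. complex_of_real (w j) * ((u j n * x n) * (cnj (u j n') * cnj (x n'))))"
      unfolding sum_product by (simp only: sum_distrib_left)
    also have "\<dots> = (\<Sum>n<N. \<Sum>n'<N. x n * cnj (x n') * ?c j n n')"
      by (simp add: mult_ac)
    finally show ?thesis .
  qed
  have "(\<lambda>j. \<Sum>n<N. \<Sum>n'<N. x n * cnj (x n') * ?c j n n') sums
      (\<Sum>n<N. \<Sum>n'<N. x n * cnj (x n') * (if n = n' then complex_of_real (w n) else 0))"
    by (intro sums_sum sums_mult u_columns_orthogonal)
  also have "(\<Sum>n<N. \<Sum>n'<N. x n * cnj (x n') * (if n = n' then complex_of_real (w n) else 0)) =
      (\<Sum>n<N. \<Sum>n'<N. if n = n' then complex_of_real (w n * (norm (x n))\<^sup>2) else 0)"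
    by (intro sum.cong refl) (simp add: cnj_mult_self mult_ac)
  also have "\<dots> = complex_of_real (\<Sum>n<N. w n * (norm (x n))\<^sup>2)"
    by (simp add: sum.delta')
  finally show ?thesis
    unfolding expand[symmetric] by (simp only: sums_of_real_iff)
qed

lemma U_seq_l2_le:
  assumes "l2 x"
  shows "l2 (U_seq x)" and "l2_sqnorm (U_seq x) \<le> l2_sqnorm x"
proof -
  have partial_le: "(\<Sum>j<K. w j * (norm (U_seq x j))\<^sup>2) \<le> l2_sqnorm x" for K
  proof -
    have "(\<Sum>j<K. w j * (norm (\<Sum>n<N. u j n * x n))\<^sup>2) \<le> l2_sqnorm x" for N
    proof -
      have "(\<Sum>j<K. w j * (norm (\<Sum>n<N. u j n * x n))\<^sup>2) \<le> (\<Sum>j. w j * (norm (\<Sum>n<N. u j n * x n))\<^sup>2)"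
        using U_seq_isometric_finite[where N = N and x = x]
        by (intro sum_le_suminf) (auto simp: sums_iff w_nonneg)
      also have "\<dots> = (\<Sum>n<N. w n * (norm (x n))\<^sup>2)"
        using U_seq_isometric_finite[where N = N and x = x] by (simp add: sums_iff)
      also have "\<dots> \<le> l2_sqnorm x"
        using assms unfolding l2_sqnorm_def l2_def
        by (intro sum_le_suminf) (auto simp: w_nonneg)
      finally show ?thesis .
    qed
    moreover have "(\<lambda>N. \<Sum>j<K. w j * (norm (\<Sum>n<N. u j n * x n))\<^sup>2) \<longlonglongrightarrow> (\<Sum>j<K. w j * (norm (U_seq x j))\<^sup>2)"
      unfolding U_seq_def by (intro tendsto_intros summable_LIMSEQ U_seq_summable assms)
    ultimately show ?thesis
      using LIMSEQ_le_const2 by blast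
  qed
  show "l2 (U_seq x)"
    unfolding l2_def using partial_le
    by (intro summableI_nonneg_bounded) (auto simp: w_nonneg)
  then show "l2_sqnorm (U_seq x) \<le> l2_sqnorm x"
    unfolding l2_sqnorm_def[of "U_seq x"] l2_def by (intro suminf_le_const partial_le)
qed

lemma l2_sqnorm_U_seq: assumes "l2 x" shows "l2_sqnorm (U_seq x) = l2_sqnorm x"
  using U_seq_l2_le[OF assms] U_seq_l2_le[OF U_seq_l2_le(1)[OF assms]] U_seq_U_seq[OF assms]
  by simp

lemma U_seq_add_cmult:
  assumes "l2 x" "l2 y"
  shows "U_seq (\<lambda>n. x n + c * y n) = (\<lambda>j. U_seq x j + c * U_seq y j)"
proof
  fix j
  have "(\<lambda>n. u j n * (x n + c * y n)) sums (U_seq x j + c * U_seq y j)"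
    using sums_add[OF summable_sums[OF U_seq_summable[OF assms(1)]]
        sums_mult[OF summable_sums[OF U_seq_summable[OF assms(2)]], of c]]
    by (simp add: U_seq_def algebra_simps)
  then show "U_seq (\<lambda>n. x n + c * y n) j = U_seq x j + c * U_seq y j"
    by (simp add: U_seq_def sums_iff)
qed

lemma l2_inner_U_seq:
  assumes "l2 x" "l2 y"
  shows "l2_inner (U_seq x) (U_seq y) = l2_inner x y"
proof -
  have "l2_sqnorm (\<lambda>j. U_seq x j + c * U_seq y j) = l2_sqnorm (\<lambda>n. x n + c * y n)" for c
    using l2_sqnorm_U_seq[OF l2_add[OF assms(1) l2_cmult[OF assms(2)]]] U_seq_add_cmult[OF assms]
    by simp
  from this[of 1] this[of "-1"] this[of \<i>] this[of "-\<i>"]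
  have "4 * l2_inner (U_seq x) (U_seq y) = 4 * l2_inner x y"
    using l2_polarization[OF assms] l2_polarization[OF U_seq_l2_le(1)[OF assms(1)] U_seq_l2_le(1)[OF assms(2)]]
    by simp
  then show ?thesis
    by simp
qed

lemma U_seq_self_adjoint:
  assumes "l2 x" "l2 y"
  shows "l2_inner (U_seq x) y = l2_inner x (U_seq y)"
  using l2_inner_U_seq[OF assms(1) U_seq_l2_le(1)[OF assms(2)]] U_seq_U_seq[OF assms(2)] by simp

section \<open>Multiplication by \<open>q\<close> and its adjoint\<close>

definition Q_seq :: "(nat \<Rightarrow> complex) \<Rightarrow> nat \<Rightarrow> complex" where
  "Q_seq x i = (\<Sum>k=0..i. qc k * x (i - k))"

definition Q_adj :: "(nat \<Rightarrow> complex) \<Rightarrow> nat \<Rightarrow> complex" where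
  "Q_adj y m = (\<Sum>k\<le>\<gamma>. cnj (qc k) * shift_adj k y m)"

lemma Q_seq_eq_sum_shift: "Q_seq x i = (\<Sum>k\<le>\<gamma>. qc k * shift k x i)"
proof -
  have "Q_seq x i = (\<Sum>k\<le>i + \<gamma>. if k \<le> i then qc k * x (i - k) else 0)"
    unfolding Q_seq_def by (rule sum.mono_neutral_cong_left) auto
  also have "\<dots> = (\<Sum>k\<le>i + \<gamma>. if k \<le> \<gamma> then qc k * shift k x i else 0)"
    by (intro sum.cong refl) (auto simp: shift_def qc_eq_0)
  also have "\<dots> = (\<Sum>k\<le>\<gamma>. qc k * shift k x i)"
    by (rule sum.mono_neutral_cong_right) auto
  finally show ?thesis .
qed

lemma l2_Q_seq: "l2 x \<Longrightarrow> l2 (Q_seq x)"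
  unfolding Q_seq_eq_sum_shift[abs_def] by (intro l2_sum l2_cmult l2_shift)

lemma l2_Q_adj: "l2 y \<Longrightarrow> l2 (Q_adj y)"
  unfolding Q_adj_def[abs_def] by (intro l2_sum l2_cmult l2_shift_adj)

lemma l2_inner_Q_seq: assumes "l2 x" "l2 y" shows "l2_inner (Q_seq x) y = l2_inner x (Q_adj y)"
proof -
  have "l2_inner (Q_seq x) y = (\<Sum>k\<le>\<gamma>. qc k * l2_inner x (shift_adj k y))"
    unfolding Q_seq_eq_sum_shift[abs_def] using assms
    by (simp add: l2_inner_sum_left l2_cmult l2_shift l2_inner_cmult_left l2_inner_shift)
  also have "\<dots> = cnj (l2_inner (Q_adj y) x)"
    unfolding Q_adj_def[abs_def] using assms
    by (simp add: l2_inner_sum_left l2_cmult l2_shift_adj l2_inner_cmult_left l2_inner_commute[of x])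
  also have "\<dots> = l2_inner x (Q_adj y)"
    using l2_inner_commute[OF assms(1) l2_Q_adj[OF assms(2)]] by simp
  finally show ?thesis .
qed

lemma Q_adj_eq_0: "(\<And>k. k \<le> \<gamma> \<Longrightarrow> y (m + k) = 0) \<Longrightarrow> Q_adj y m = 0"
  unfolding Q_adj_def shift_adj_def by simp

section \<open>Recovering \<open>g\<close> from \<open>U M\<^sub>q\<^sup>* g\<close>\<close>

lemma taylor_coeff_comp_phi_eq:
  "f holomorphic_on ball 0 1 \<Longrightarrow> taylor_coeff (\<lambda>z. f (phi z)) = Q_seq (U_seq (taylor_coeff f))"
  by (simp add: fun_eq_iff taylor_coeff_comp_phi U_seq_taylor_coeff Q_seq_def)

definition Phi :: "nat \<Rightarrow> nat \<Rightarrow> complex" where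
  "Phi j = taylor_coeff (\<lambda>z. phi z ^ j)"

lemma phi_power_holomorphic: "(\<lambda>z. phi z ^ j) holomorphic_on ball 0 1"
  by (intro holomorphic_intros phi_holomorphic)

lemma Phi_eq: "Phi j = Q_seq (U_seq (basis_vec j))"
proof -
  have "(\<lambda>z. z ^ j) holomorphic_on ball 0 1"
    by (intro holomorphic_intros)
  from taylor_coeff_comp_phi_eq[OF this] show ?thesis
    by (simp add: Phi_def basis_vec_eq_taylor_coeff)
qed

lemma l2_Phi: "l2 (Phi j)"
  unfolding Phi_eq by (intro l2_Q_seq U_seq_l2_le(1) l2_basis_vec)

lemma Q_seq_U_seq_Phi: "Q_seq (U_seq (Phi j)) = basis_vec j"
proof -
  have "Q_seq (U_seq (Phi j)) = taylor_coeff (\<lambda>z. phi (phi z) ^ j)"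
    unfolding Phi_def by (rule taylor_coeff_comp_phi_eq[OF phi_power_holomorphic, symmetric])
  also have "\<dots> = taylor_coeff (\<lambda>z. z ^ j)"
    by (intro ext taylor_coeff_cong[of 1]) (auto simp: phi_phi)
  finally show ?thesis
    by (simp add: basis_vec_eq_taylor_coeff)
qed

lemma l2_inner_Phi:
  assumes "l2 G"
  shows "l2_inner (Phi j) G = complex_of_real (w j) * cnj (U_seq (Q_adj G) j)"
proof -
  have "l2_inner (Phi j) G = l2_inner (U_seq (basis_vec j)) (Q_adj G)"
    unfolding Phi_eq by (intro l2_inner_Q_seq U_seq_l2_le(1) l2_basis_vec assms)
  also have "\<dots> = l2_inner (basis_vec j) (U_seq (Q_adj G))"
    by (intro U_seq_self_adjoint l2_basis_vec l2_Q_adj assms)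
  finally show ?thesis
    using assms by (simp add: l2_inner_basis_vec_left l2_Q_adj U_seq_l2_le(1))
qed

text \<open>\<open>(U M\<^sub>q\<^sup>*)\<^sup>2\<close> is the adjoint of \<open>(M\<^sub>q U)\<^sup>2 = C\<^sub>\<phi>\<^sub>\<alpha>\<^sup>2 = I\<close>; we test it against basis vectors.\<close>

lemma U_seq_Q_adj_involution:
  assumes "l2 G"
  shows "U_seq (Q_adj (U_seq (Q_adj G))) = G"
proof
  fix j
  define E where "E = U_seq (Q_adj G)"
  have E: "l2 E"
    unfolding E_def by (intro U_seq_l2_le(1) l2_Q_adj assms)
  have "complex_of_real (w j) * cnj (U_seq (Q_adj E) j) = l2_inner (Phi j) E"
    by (rule l2_inner_Phi[OF E, symmetric])
  also have "\<dots> = l2_inner (U_seq (Phi j)) (Q_adj G)"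
    unfolding E_def by (intro U_seq_self_adjoint[symmetric] l2_Phi l2_Q_adj assms)
  also have "\<dots> = l2_inner (Q_seq (U_seq (Phi j))) G"
    by (intro l2_inner_Q_seq[symmetric] U_seq_l2_le(1) l2_Phi assms)
  also have "\<dots> = complex_of_real (w j) * cnj (G j)"
    unfolding Q_seq_U_seq_Phi by (rule l2_inner_basis_vec_left[OF assms])
  finally show "U_seq (Q_adj (U_seq (Q_adj G))) j = G j"
    by (simp add: E_def w_nonzero)
qed

text \<open>With \<open>E\<^sub>G = U M\<^sub>q\<^sup>* G\<close>, \<open>\<langle>G, H\<rangle> = \<langle>M\<^sub>q\<^sup>* E\<^sub>G, M\<^sub>q\<^sup>* E\<^sub>H\<rangle>\<close>, and \<open>M\<^sub>q\<^sup>*\<close> looks only \<open>\<gamma>\<close>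
  coefficients ahead, so this inner product vanishes termwise.\<close>

lemma l2_inner_eq_0_if_supports_apart:
  assumes "l2 G" "l2 H"
    and apart: "\<And>i j. U_seq (Q_adj G) i \<noteq> 0 \<Longrightarrow> U_seq (Q_adj H) j \<noteq> 0 \<Longrightarrow> i + \<gamma> < j \<or> j + \<gamma> < i"
  shows "l2_inner G H = 0"
proof -
  define EG EH where "EG = U_seq (Q_adj G)" and "EH = U_seq (Q_adj H)"
  have E: "l2 EG" "l2 EH"
    unfolding EG_def EH_def by (intro U_seq_l2_le(1) l2_Q_adj assms)+
  have "Q_adj EG k = 0 \<or> Q_adj EH k = 0" for k
  proof (rule ccontr)
    assume "\<not> ?thesis"
    then obtain i i' where "i \<le> \<gamma>" "EG (k + i) \<noteq> 0" "i' \<le> \<gamma>" "EH (k + i') \<noteq> 0"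
      using Q_adj_eq_0 by meson
    with apart show False
      unfolding EG_def EH_def by fastforce
  qed
  then have "(\<lambda>k. complex_of_real (w k) * Q_adj EG k * cnj (Q_adj EH k)) = (\<lambda>_. 0)"
    by (metis complex_cnj_zero mult_zero_left mult_zero_right)
  then have "l2_inner (Q_adj EG) (Q_adj EH) = 0"
    by (simp add: l2_inner_def)
  moreover have "l2_inner G H = l2_inner (Q_adj EG) (Q_adj EH)"
    using l2_inner_U_seq[OF l2_Q_adj[OF E(1)] l2_Q_adj[OF E(2)]]
    by (simp add: EG_def EH_def U_seq_Q_adj_involution assms)
  ultimately show ?thesis
    by simp
qed

section \<open>Eigenvectors of \<open>C\<^sub>\<phi>\<^sup>*\<close>\<close>

lemma taylor_coeff_comp_phi_power:
  assumes "norm l = 1"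
  shows "taylor_coeff (comp_op (\<lambda>z. mobius_phi a (l * mobius_phi a z)) (\<lambda>z. phi z ^ j)) =
    (\<lambda>n. l ^ j * Phi j n)"
proof
  fix n
  have "taylor_coeff (comp_op (\<lambda>z. mobius_phi a (l * mobius_phi a z)) (\<lambda>z. phi z ^ j)) n =
      taylor_coeff (\<lambda>z. l ^ j * phi z ^ j) n"
  proof (rule taylor_coeff_cong[of 1])
    fix z :: complex assume "z \<in> ball 0 1"
    then have "norm (l * phi z) < 1"
      using phi_in_ball assms by (simp add: norm_mult)
    then show "comp_op (\<lambda>z. mobius_phi a (l * mobius_phi a z)) (\<lambda>z. phi z ^ j) z = l ^ j * phi z ^ j"
      by (simp add: comp_op_def phi_phi power_mult_distrib flip: phi_def)
  qed simp
  also have "\<dots> = l ^ j * Phi j n"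
    unfolding Phi_def by (rule taylor_coeff_cmult[OF phi_power_holomorphic]) simp
  finally show "taylor_coeff (comp_op (\<lambda>z. mobius_phi a (l * mobius_phi a z)) (\<lambda>z. phi z ^ j)) n =
      l ^ j * Phi j n" .
qed

text \<open>Pairing the eigen-equation with \<open>\<phi>\<^sub>\<alpha>\<^sup>j\<close>, an eigenvector of \<open>C\<^sub>\<phi>\<close> for \<open>\<lambda>\<^sup>j\<close>.\<close>

lemma adj_eigenspace_support:
  assumes "norm l = 1"
    and g: "g \<in> adj_eigenspace (real b) (\<lambda>z. mobius_phi a (l * mobius_phi a z)) \<mu>"
    and "U_seq (Q_adj (taylor_coeff g)) j \<noteq> 0"
  shows "l ^ j = cnj \<mu>"
proof -
  have holo: "g holomorphic_on ball 0 1" and G: "l2 (taylor_coeff g)"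
    using g by (auto simp: adj_eigenspace_def A2_iff)
  have "(\<lambda>z. phi z ^ j) \<in> A2 (real b)"
    using phi_power_holomorphic l2_Phi by (simp add: A2_iff Phi_def)
  with g have "A2_inner (real b) (comp_op (\<lambda>z. mobius_phi a (l * mobius_phi a z)) (\<lambda>z. phi z ^ j)) g =
      A2_inner (real b) (\<lambda>z. phi z ^ j) (\<lambda>z. \<mu> * g z)"
    by (auto simp: adj_eigenspace_def)
  moreover have "taylor_coeff (\<lambda>z. \<mu> * g z) = (\<lambda>n. \<mu> * taylor_coeff g n)"
    by (intro ext taylor_coeff_cmult[OF holo]) simp
  ultimately have "l2_inner (\<lambda>n. l ^ j * Phi j n) (taylor_coeff g) = l2_inner (Phi j) (\<lambda>n. \<mu> * taylor_coeff g n)"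
    by (simp add: A2_inner_eq taylor_coeff_comp_phi_power[OF assms(1)] flip: Phi_def)
  then have "l ^ j * l2_inner (Phi j) (taylor_coeff g) = cnj \<mu> * l2_inner (Phi j) (taylor_coeff g)"
    by (simp add: l2_inner_cmult_left l2_inner_cmult_right l2_Phi G)
  moreover have "l2_inner (Phi j) (taylor_coeff g) \<noteq> 0"
    using assms(3) by (simp add: l2_inner_Phi[OF G] w_nonzero)
  ultimately show ?thesis
    by simp
qed

end

section \<open>Residues modulo the order of \<open>\<lambda>\<close>\<close>

lemma power_eq_power_iff_mod:
  fixes l :: "'a::idom"
  assumes "N > 0" "l ^ N = 1" "\<And>k. 0 < k \<Longrightarrow> k < N \<Longrightarrow> l ^ k \<noteq> 1"
  shows "l ^ i = l ^ j \<longleftrightarrow> i mod N = j mod N"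
proof -
  have reduce: "l ^ n = l ^ (n mod N)" for n
  proof -
    have "l ^ n = (l ^ N) ^ (n div N) * l ^ (n mod N)"
      by (simp only: power_mult[symmetric] power_add[symmetric] mult_div_mod_eq)
    with assms(2) show ?thesis
      by simp
  qed
  have "l \<noteq> 0"
    using assms(1,2) by (auto simp: power_0_left)
  have ne: "l ^ r \<noteq> l ^ s" if "r < s" "s < N" for r s
  proof
    assume eq: "l ^ r = l ^ s"
    have "l ^ r * l ^ (s - r) = l ^ s"
      using that by (simp flip: power_add)
    then have "l ^ r * l ^ (s - r) = l ^ r * 1"
      by (simp add: eq)
    with \<open>l \<noteq> 0\<close> have "l ^ (s - r) = 1"
      by simp
    with assms(3)[of "s - r"] that show False
      by linarith
  qed
  have "i mod N < N" "j mod N < N"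
    using assms(1) by simp_all
  then have "l ^ (i mod N) = l ^ (j mod N) \<longleftrightarrow> i mod N = j mod N"
    using ne[of "i mod N" "j mod N"] ne[of "j mod N" "i mod N"] by (metis linorder_neqE_nat)
  then show ?thesis
    using reduce[of i] reduce[of j] by simp
qed

lemma mod_residues_apart:
  fixes N d i j :: nat
  assumes "2 * (d + 1) \<le> N" "i mod N = 0" "j mod N = d + 1"
  shows "i + d < j \<or> j + d < i"
proof -
  have i: "i = N * (i div N)" and j: "j = N * (j div N) + (d + 1)"
    using div_mult_mod_eq[of i N] div_mult_mod_eq[of j N] assms(2,3) by (simp_all add: mult.commute)
  show ?thesis
  proof (cases "i div N \<le> j div N")
    case True
    then have "N * (i div N) \<le> N * (j div N)"
      by (rule mult_le_mono2)
    then show ?thesis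
      using i j by linarith
  next
    case False
    then have "N * (j div N + 1) \<le> N * (i div N)"
      by (intro mult_le_mono2) simp
    then show ?thesis
      using i j assms(1) by (simp add: algebra_simps)
  qed
qed

theorem lemma5p6:
  fixes \<beta> N :: nat and \<alpha> l :: complex
  assumes "\<alpha> \<in> ball 0 1" and "\<alpha> \<noteq> 0"
    and "cmod l = 1"
    and "N > 0" and "l ^ N = 1" and "\<And>k. 0 < k \<Longrightarrow> k < N \<Longrightarrow> l ^ k \<noteq> 1"
    and "N \<ge> 2 * (3 + \<beta>)"
  shows "\<forall>g \<in> adj_eigenspace (real \<beta>) (\<lambda>z. mobius_phi \<alpha> (l * mobius_phi \<alpha> z)) (cnj l ^ 0).
         \<forall>h \<in> adj_eigenspace (real \<beta>) (\<lambda>z. mobius_phi \<alpha> (l * mobius_phi \<alpha> z)) (cnj l ^ (3 + \<beta>)).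
           A2_inner (real \<beta>) g h = 0"
proof (intro ballI)
  fix g h
  assume g: "g \<in> adj_eigenspace (real \<beta>) (\<lambda>z. mobius_phi \<alpha> (l * mobius_phi \<alpha> z)) (cnj l ^ 0)"
    and h: "h \<in> adj_eigenspace (real \<beta>) (\<lambda>z. mobius_phi \<alpha> (l * mobius_phi \<alpha> z)) (cnj l ^ (3 + \<beta>))"
  interpret mobius_involution \<beta> \<alpha>
    using assms(1) by unfold_locales simp
  have order: "l ^ i = l ^ j \<longleftrightarrow> i mod N = j mod N" for i j
    using power_eq_power_iff_mod[OF assms(4-6)] .
  have "U_seq (Q_adj (taylor_coeff g)) i \<noteq> 0 \<Longrightarrow> i mod N = 0" for i
    using adj_eigenspace_support[OF assms(3) g] order[of i 0] by simp
  moreover have "U_seq (Q_adj (taylor_coeff h)) j \<noteq> 0 \<Longrightarrow> j mod N = \<gamma> + 1" for j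
    using adj_eigenspace_support[OF assms(3) h] order[of j "3 + \<beta>"] assms(7) by (simp add: \<gamma>_def)
  moreover have "l2 (taylor_coeff g)" "l2 (taylor_coeff h)"
    using g h by (simp_all add: adj_eigenspace_def A2_iff)
  ultimately have "l2_inner (taylor_coeff g) (taylor_coeff h) = 0"
    using mod_residues_apart[of \<gamma> N] assms(7)
    by (intro l2_inner_eq_0_if_supports_apart) (auto simp: \<gamma>_def)
  then show "A2_inner (real \<beta>) g h = 0"
    by (simp add: A2_inner_eq)
qed

end
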